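(* Let $\rho$ be a density matrix on $\mathbb{C}^d$ and $H$ a Hermitian operator on $\mathbb{C}^d$, with $F_Q>0$. Then for all $n=1,2,\dots$, $$\frac{\left|B_n^{(\mathsf{Kry})}-F_Q\right|}{F_Q}\le\frac{\left|B_{2n-1}^{(\mathsf{Tay})}-F_Q\right|}{F_Q}.$$
   Context: Write $\rho=\sum_k p_k|k\rangle\langle k|$ (spectral decomposition). The quantum Fisher information is $F_Q=2\sum_{k,l:\,p_k+p_l>0}\frac{(p_k-p_l)^2}{p_k+p_l}|\langle k|H|l\rangle|^2$. Let $\mathcal{X}$ be the real space of Hermitian operators $X$ with $\langle k|X|l\rangle=0$ whenever $p_k=p_l=0$, with inner product $\langle X,Y\rangle_\rho=\mathrm{tr}[\rho(XY+YX)/2]$ and norm $\|X\|_\rho=\sqrt{\langle X,X\rangle_\rho}$. Let $\mathcal{R}_\rho(X)=\frac12(\rho X+X\rho)$ and let $L\in\mathcal{X}$ be the unique solution of $\mathcal{R}_\rho(L)=i[\rho,H]$ (the SLD; $F_Q=\|L\|_\rho^2$). Let $\mathcal{K}_n=\mathrm{span}\{\mathcal{R}_\rho^{k}(i[\rho,H]):k=0,\dots,n-1\}$, let $L_n$ be the $\langle\cdot,\cdot\rangle_\rho$-orthogonal projection of $L$ onto $\mathcal{K}_n$, and $B_n^{(\mathsf{Kry})}=\|L_n\|_\rho^2$ (the $n$-th Krylov bound). The $m$-th Taylor bound is $$B_m^{(\mathsf{Tay})}=2\,\mathrm{tr}\Big(\sum_{l=0}^{m}(\rho\otimes\mathbb{1}-\mathbb{1}\otimes\rho)^2(\mathbb{1}\otimes\mathbb{1}-\rho\otimes\mathbb{1}-\mathbb{1}\otimes\rho)^l\,S\,(H\otimes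 H)\Big),$$ where $\mathbb{1}$ is the identity on $\mathbb{C}^d$ and $S$ is the swap operator on $\mathbb{C}^d\otimes\mathbb{C}^d$. *)

theory Defs
  imports "HOL-Analysis.Analysis"
begin

type_synonym 'd cmat = "complex^'d^'d"

definition adj :: "'d::finite cmat \<Rightarrow> 'd cmat" where
  "adj A = (\<chi> i j. cnj (A $ j $ i))"

definition hermitian :: "'d::finite cmat \<Rightarrow> bool" where
  "hermitian A \<longleftrightarrow> adj A = A"

definition unitary :: "'d::finite cmat \<Rightarrow> bool" where
  "unitary U \<longleftrightarrow> adj U ** U = mat 1 \<and> U ** adj U = mat 1"

definition psd :: "'d::finite cmat \<Rightarrow> bool" where
  "psd A \<longleftrightarrow> hermitian A \<and>
     (\<forall>v::complex^'d. 0 \<le> Re (\<Sum>i\<in>UNIV. \<Sum>j\<in>UNIV. cnj (v $ i) * A $ i $ j * v $ j))"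

definition density_matrix :: "'d::finite cmat \<Rightarrow> bool" where
  "density_matrix \<rho> \<longleftrightarrow> psd \<rho> \<and> trace \<rho> = 1"

definition diagm :: "('d::finite \<Rightarrow> real) \<Rightarrow> 'd cmat" where
  "diagm p = (\<chi> i j. if i = j then complex_of_real (p i) else 0)"

text \<open>Spectral decomposition: rho = sum_k p_k |k><k| with |k> the k-th column of the unitary U.\<close>
definition spectral_decomp :: "'d::finite cmat \<Rightarrow> 'd cmat \<Rightarrow> ('d \<Rightarrow> real) \<Rightarrow> bool" where
  "spectral_decomp \<rho> U p \<longleftrightarrow> unitary U \<and> \<rho> = U ** diagm p ** adj U"

text \<open>Matrix element <k|X|l> in the eigenbasis given by the columns of U.\<close>
definition melem :: "'d::finite cmat \<Rightarrow> 'd cmat \<Rightarrow> 'd \<Rightarrow> 'd \<Rightarrow> complex" where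
  "melem U X k l = (adj U ** X ** U) $ k $ l"

definition QFI :: "'d::finite cmat \<Rightarrow> ('d \<Rightarrow> real) \<Rightarrow> 'd cmat \<Rightarrow> real" where
  "QFI U p H = 2 * (\<Sum>(k,l)\<in>{(k,l). p k + p l > 0}.
       (p k - p l)^2 / (p k + p l) * (cmod (melem U H k l))^2)"

definition commutator :: "'d::finite cmat \<Rightarrow> 'd cmat \<Rightarrow> 'd cmat" where
  "commutator A B = A ** B - B ** A"

definition Xspace :: "'d::finite cmat \<Rightarrow> ('d \<Rightarrow> real) \<Rightarrow> 'd cmat set" where
  "Xspace U p = {X. hermitian X \<and> (\<forall>k l. p k = 0 \<and> p l = 0 \<longrightarrow> melem U X k l = 0)}"

text \<open>Inner product <X,Y>_rho = tr[rho (XY+YX)/2] (real-valued on Hermitian operators).\<close>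
definition rho_inner :: "'d::finite cmat \<Rightarrow> 'd cmat \<Rightarrow> 'd cmat \<Rightarrow> real" where
  "rho_inner \<rho> X Y = Re (trace (\<rho> ** ((1/2::real) *\<^sub>R (X ** Y + Y ** X))))"

definition Rop :: "'d::finite cmat \<Rightarrow> 'd cmat \<Rightarrow> 'd cmat" where
  "Rop \<rho> X = (1/2::real) *\<^sub>R (\<rho> ** X + X ** \<rho>)"

definition icomm :: "'d::finite cmat \<Rightarrow> 'd cmat \<Rightarrow> 'd cmat" where
  "icomm \<rho> H = (\<chi> i j. \<i> * commutator \<rho> H $ i $ j)"

definition SLD :: "'d::finite cmat \<Rightarrow> 'd cmat \<Rightarrow> ('d \<Rightarrow> real) \<Rightarrow> 'd cmat \<Rightarrow> 'd cmat" where
  "SLD \<rho> U p H = (THE L. L \<in> Xspace U p \<and> Rop \<rho> L = icomm \<rho> H)"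

definition Krylov :: "'d::finite cmat \<Rightarrow> 'd cmat \<Rightarrow> nat \<Rightarrow> 'd cmat set" where
  "Krylov \<rho> H n = {Y. \<exists>c::nat \<Rightarrow> real. Y = (\<Sum>k<n. c k *\<^sub>R ((Rop \<rho> ^^ k) (icomm \<rho> H)))}"

definition proj :: "'d::finite cmat \<Rightarrow> 'd cmat set \<Rightarrow> 'd cmat \<Rightarrow> 'd cmat" where
  "proj \<rho> K A = (THE Y. Y \<in> K \<and> (\<forall>Z\<in>K. rho_inner \<rho> (A - Y) Z = 0))"

definition krylov_bound :: "'d::finite cmat \<Rightarrow> 'd cmat \<Rightarrow> ('d \<Rightarrow> real) \<Rightarrow> 'd cmat \<Rightarrow> nat \<Rightarrow> real" where
  "krylov_bound \<rho> U p H n =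
     (let Ln = proj \<rho> (Krylov \<rho> H n) (SLD \<rho> U p H) in rho_inner \<rho> Ln Ln)"

text \<open>Operators on C^d (x) C^d as matrices indexed by pairs.\<close>
definition tensor :: "'d::finite cmat \<Rightarrow> 'd cmat \<Rightarrow> complex^('d\<times>'d)^('d\<times>'d)" where
  "tensor A B = (\<chi> r c. A $ fst r $ fst c * B $ snd r $ snd c)"

definition swap_op :: "complex^('d::finite\<times>'d)^('d\<times>'d)" where
  "swap_op = (\<chi> r c. if fst r = snd c \<and> snd r = fst c then 1 else 0)"

definition mpow :: "'a::semiring_1^'n::finite^'n \<Rightarrow> nat \<Rightarrow> 'a^'n^'n" where
  "mpow M l = (((**) M) ^^ l) (mat 1)"

definition taylor_bound :: "'d::finite cmat \<Rightarrow> 'd cmat \<Rightarrow> nat \<Rightarrow> complex" where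
  "taylor_bound \<rho> H m =
    2 * trace (\<Sum>l\<in>{0..m}.
        mpow (tensor \<rho> (mat 1) - tensor (mat 1) \<rho>) 2
        ** mpow (tensor (mat 1) (mat 1) - tensor \<rho> (mat 1) - tensor (mat 1) \<rho>) l
        ** swap_op ** tensor H H)"

end

theory Submission
  imports Defs
begin

text \<open>In the eigenbasis of \<open>\<rho>\<close> the superoperator \<open>R\<^sub>\<rho>\<close> multiplies the
  \<open>(k,l)\<close> entry by \<open>s\<^sub>k\<^sub>l/2\<close>, where \<open>s\<^sub>k\<^sub>l = p\<^sub>k + p\<^sub>l\<close>, and
  \<open>\<parallel>X\<parallel>\<^sub>\<rho>\<^sup>2 = \<Sum> s\<^sub>k\<^sub>l/2 |X\<^sub>k\<^sub>l|\<^sup>2\<close>. Expanding \<open>L = R\<^sub>\<rho>\<^sup>-\<^sup>1 i[\<rho>,H]\<close> as the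
  Neumann series \<open>2 \<Sum>\<^sub>j (1 - 2R\<^sub>\<rho>)\<^sup>j i[\<rho>,H]\<close>, its \<open>n\<close>-th partial sum \<open>Y\<^sub>n\<close> lies
  in \<open>K\<^sub>n\<close> and \<open>L - Y\<^sub>n\<close> has entries \<open>(1 - s\<^sub>k\<^sub>l)\<^sup>n L\<^sub>k\<^sub>l\<close>. Hence
  \<open>\<parallel>L - Y\<^sub>n\<parallel>\<^sub>\<rho>\<^sup>2 = \<Sum> s\<^sub>k\<^sub>l/2 (1 - s\<^sub>k\<^sub>l)\<^sup>2\<^sup>n |L\<^sub>k\<^sub>l|\<^sup>2\<close>, and diagonalising the
  Taylor bound by \<open>U \<otimes> U\<close> shows that this is exactly \<open>F\<^sub>Q - B\<^sub>2\<^sub>n\<^sub>-\<^sub>1\<^sup>T\<^sup>a\<^sup>y\<close>.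
  Since \<open>L\<^sub>n\<close> is the orthogonal projection of \<open>L\<close> onto \<open>K\<^sub>n\<close>, Pythagoras gives
  \<open>0 \<le> F\<^sub>Q - B\<^sub>n\<^sup>K\<^sup>r\<^sup>y = \<parallel>L - L\<^sub>n\<parallel>\<^sub>\<rho>\<^sup>2 \<le> \<parallel>L - Y\<^sub>n\<parallel>\<^sub>\<rho>\<^sup>2\<close>.\<close>

section \<open>Matrix algebra\<close>

lemma matrix_mult_entry: "(A ** B) $ i $ j = (\<Sum>k\<in>UNIV. A $ i $ k * B $ k $ j)"
  by (simp add: matrix_matrix_mult_def)

lemma matrix_add_rdistrib: "((A::'a::semiring_1^'n::finite^'m) + B) ** C = A ** C + B ** C"
  by (simp add: vec_eq_iff matrix_matrix_mult_def sum.distrib distrib_right)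

lemma matrix_diff_ldistrib: "(A::'a::ring_1^'n::finite^'m) ** (B - C) = A ** B - A ** C"
  by (simp add: vec_eq_iff matrix_matrix_mult_def sum_subtractf algebra_simps)

lemma matrix_diff_rdistrib: "((A::'a::ring_1^'n::finite^'m) - B) ** C = A ** C - B ** C"
  by (simp add: vec_eq_iff matrix_matrix_mult_def sum_subtractf algebra_simps)

lemma matrix_sum_ldistrib: "(A::'a::semiring_1^'n::finite^'m) ** (\<Sum>i\<in>S. f i) = (\<Sum>i\<in>S. A ** f i)"
  by (induction S rule: infinite_finite_induct) (auto simp: matrix_add_ldistrib)

lemma matrix_sum_rdistrib: "(\<Sum>i\<in>S. f i) ** (A::'a::semiring_1^'n::finite^'m) = (\<Sum>i\<in>S. f i ** A)"
  by (induction S rule: infinite_finite_induct) (auto simp: matrix_add_rdistrib)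

lemma matrix_scaleR_left: "(r *\<^sub>R (A::'a::real_algebra_1^'n::finite^'m)) ** B = r *\<^sub>R (A ** B)"
  by (simp add: vec_eq_iff matrix_matrix_mult_def scaleR_sum_right)

lemma matrix_scaleR_right: "(A::'a::real_algebra_1^'n::finite^'m) ** (r *\<^sub>R B) = r *\<^sub>R (A ** B)"
  by (simp add: vec_eq_iff matrix_matrix_mult_def scaleR_sum_right)

lemma trace_scaleR: "trace (r *\<^sub>R (A::'a::real_algebra_1^'n::finite^'n)) = r *\<^sub>R trace A"
  by (simp add: trace_def scaleR_sum_right)

lemma adj_mult: "adj (A ** B) = adj B ** adj A"
  by (simp add: vec_eq_iff adj_def matrix_matrix_mult_def mult.commute)

lemma adj_adj [simp]: "adj (adj A) = A"
  by (simp add: vec_eq_iff adj_def)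

lemma adj_zero: "adj 0 = 0"
  by (simp add: vec_eq_iff adj_def)

lemma adj_add: "adj (A + B) = adj A + adj B"
  by (simp add: vec_eq_iff adj_def)

lemma adj_scaleR: "adj (r *\<^sub>R A) = r *\<^sub>R adj A"
  by (simp add: vec_eq_iff adj_def)

lemma mpow_0 [simp]: "mpow M 0 = mat 1"
  by (simp add: mpow_def)

lemma mpow_Suc: "mpow M (Suc l) = M ** mpow M l"
  by (simp add: mpow_def)

definition diag_mat :: "('n::finite \<Rightarrow> 'a::zero) \<Rightarrow> 'a^'n^'n" where
  "diag_mat f = (\<chi> i j. if i = j then f i else 0)"

lemma diag_mat_mult: "diag_mat f ** diag_mat g = diag_mat (\<lambda>i. f i * (g i :: 'a::semiring_1))"
proof -
  have "(diag_mat f ** diag_mat g) $ i $ j = diag_mat (\<lambda>i. f i * g i) $ i $ j" for i j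
  proof -
    have "(diag_mat f ** diag_mat g) $ i $ j
        = (\<Sum>k\<in>UNIV. if k = i then f i * (if i = j then g i else 0) else 0)"
      unfolding matrix_mult_entry diag_mat_def by (intro sum.cong refl) auto
    then show ?thesis by (simp add: diag_mat_def)
  qed
  then show ?thesis by (simp add: vec_eq_iff)
qed

lemma diag_mat_diff: "diag_mat f - diag_mat g = diag_mat (\<lambda>i. f i - (g i :: 'a::ab_group_add))"
  by (simp add: vec_eq_iff diag_mat_def)

lemma diag_mat_one: "mat 1 = diag_mat (\<lambda>_. 1)"
  by (simp add: vec_eq_iff diag_mat_def mat_def)

lemma diag_mat_sum: "(\<Sum>l\<in>S. diag_mat (f l)) = diag_mat (\<lambda>i. \<Sum>l\<in>S. (f l i :: 'a::comm_monoid_add))"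
  by (induction S rule: infinite_finite_induct) (simp_all add: vec_eq_iff diag_mat_def)

lemma mpow_diag_mat: "mpow (diag_mat f) l = diag_mat (\<lambda>i. f i ^ l)"
  by (induction l) (simp_all only: mpow_0 mpow_Suc diag_mat_one diag_mat_mult power_0 power_Suc)

lemma trace_diag_mat_mult: "trace (diag_mat g ** X) = (\<Sum>i\<in>UNIV. g i * X $ i $ i)"
  unfolding trace_def
proof (intro sum.cong refl)
  fix i
  have "(diag_mat g ** X) $ i $ i = (\<Sum>k\<in>UNIV. if k = i then g i * X $ i $ i else 0)"
    unfolding matrix_mult_entry diag_mat_def by (intro sum.cong refl) auto
  then show "(diag_mat g ** X) $ i $ i = g i * X $ i $ i" by simp
qed

lemma diagm_eq_diag_mat: "diagm p = diag_mat (\<lambda>i. complex_of_real (p i))"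
  by (simp add: diagm_def diag_mat_def)

lemma sum_UNIV_prod:
  "(\<Sum>r\<in>UNIV. f r) = (\<Sum>a\<in>UNIV. \<Sum>b\<in>UNIV. f (a, b))"
  by (simp only: UNIV_Times_UNIV[symmetric] sum.cartesian_product')

lemma tensor_entry: "tensor A B $ r $ c = A $ fst r $ fst c * B $ snd r $ snd c"
  by (simp add: tensor_def)

lemma tensor_mult: "tensor A B ** tensor C D = tensor (A ** C) (B ** D)"
proof -
  have "(tensor A B ** tensor C D) $ r $ c = tensor (A ** C) (B ** D) $ r $ c" for r c
  proof -
    have "(tensor A B ** tensor C D) $ r $ c
       = (\<Sum>a\<in>UNIV. \<Sum>b\<in>UNIV. (A $ fst r $ a * C $ a $ fst c) * (B $ snd r $ b * D $ b $ snd c))"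
      by (simp add: matrix_mult_entry tensor_entry sum_UNIV_prod mult_ac)
    also have "\<dots> = tensor (A ** C) (B ** D) $ r $ c"
      by (simp add: tensor_entry matrix_mult_entry sum_product)
    finally show ?thesis .
  qed
  then show ?thesis by (simp add: vec_eq_iff)
qed

lemma tensor_diag_mat:
  "tensor (diag_mat f) (diag_mat g) = diag_mat (\<lambda>r. f (fst r) * g (snd r))"
  by (auto simp: vec_eq_iff tensor_entry diag_mat_def prod_eq_iff)

lemma tensor_one: "tensor (mat 1) (mat 1) = mat 1"
  by (simp add: diag_mat_one tensor_diag_mat)

lemma swap_op_mult_entry: "(swap_op ** X) $ r $ c = X $ (snd r, fst r) $ c"
proof -
  have "(swap_op ** X) $ r $ c = (\<Sum>x\<in>UNIV. (if x = (snd r, fst r) then 1 else 0) * X $ x $ c)"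
    unfolding matrix_mult_entry swap_op_def by (intro sum.cong refl) (auto simp: prod_eq_iff)
  then show ?thesis by (simp add: if_distrib if_distribR sum.delta cong: if_cong)
qed

lemma mult_swap_op_entry: "(X ** swap_op) $ r $ c = X $ r $ (snd c, fst c)"
proof -
  have "(X ** swap_op) $ r $ c = (\<Sum>x\<in>UNIV. X $ r $ x * (if x = (snd c, fst c) then 1 else 0))"
    unfolding matrix_mult_entry swap_op_def by (intro sum.cong refl) (auto simp: prod_eq_iff)
  then show ?thesis by (simp add: if_distrib if_distribR sum.delta' cong: if_cong)
qed

lemma tensor_swap_op_commute: "tensor A B ** swap_op = swap_op ** tensor B A"
  by (simp add: vec_eq_iff mult_swap_op_entry swap_op_mult_entry tensor_entry mult.commute)

section \<open>Change of basis\<close>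

locale matrix_similarity =
  fixes W W' :: "'a::comm_ring_1^'n::finite^'n"
  assumes inverse_left: "W' ** W = mat 1" and inverse_right: "W ** W' = mat 1"
begin

definition transform :: "'a^'n^'n \<Rightarrow> 'a^'n^'n" where
  "transform X = W' ** X ** W"

lemma transform_mult: "transform (X ** Y) = transform X ** transform Y"
proof -
  have "transform X ** transform Y = W' ** X ** (W ** W') ** Y ** W"
    by (simp only: transform_def matrix_mul_assoc)
  also have "\<dots> = transform (X ** Y)"
    by (simp only: inverse_right matrix_mul_rid transform_def matrix_mul_assoc)
  finally show ?thesis by (rule sym)
qed

lemma transform_inverse: "transform (W ** X ** W') = X"
proof -
  have "transform (W ** X ** W') = (W' ** W) ** X ** (W' ** W)"
    by (simp only: transform_def matrix_mul_assoc)
  then show ?thesis by (simp add: inverse_left)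
qed

lemma transform_inject: "transform X = transform Y \<longleftrightarrow> X = Y"
proof
  have "W ** transform X ** W' = X" for X
    by (simp add: transform_def matrix_mul_assoc inverse_right flip: matrix_mul_assoc[of _ W])
  then show "transform X = transform Y \<Longrightarrow> X = Y" by metis
qed simp

lemma transform_one: "transform (mat 1) = mat 1"
  by (simp add: transform_def inverse_left)

lemma transform_add: "transform (X + Y) = transform X + transform Y"
  by (simp add: transform_def matrix_add_ldistrib matrix_add_rdistrib)

lemma transform_diff: "transform (X - Y) = transform X - transform Y"
  by (simp add: transform_def matrix_diff_ldistrib matrix_diff_rdistrib)

lemma transform_sum: "transform (\<Sum>i\<in>S. f i) = (\<Sum>i\<in>S. transform (f i))"
  by (simp add: transform_def matrix_sum_ldistrib matrix_sum_rdistrib)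

lemma transform_mpow: "transform (mpow X l) = mpow (transform X) l"
  by (induction l) (simp_all add: transform_one mpow_Suc transform_mult)

lemma trace_transform: "trace (transform X) = trace X"
proof -
  have "trace (transform X) = trace (W ** (W' ** X))"
    unfolding transform_def by (rule trace_mul_sym)
  then show ?thesis by (simp add: matrix_mul_assoc inverse_right)
qed

end

section \<open>Orthogonal projection onto a finite span\<close>

locale symmetric_bilinear_form =
  fixes B :: "'a::real_vector \<Rightarrow> 'a \<Rightarrow> real"
  assumes bilinear: "bilinear B"
    and symmetric: "B x y = B y x"
begin

lemma orthogonal_to_span:
  assumes "\<And>s. s \<in> S \<Longrightarrow> B x s = 0" and "y \<in> span S"
  shows "B x y = 0"
  using linear_eq_0_on_span[of "B x"] assms bilinear by (auto simp: bilinear_def)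

lemma pythagoras:
  assumes "B x y = 0"
  shows "B (x + y) (x + y) = B x x + B y y"
  using assms symmetric[of x y] by (simp add: bilinear_ladd[OF bilinear] bilinear_radd[OF bilinear])

lemma ex_orthogonal_projection:
  assumes "finite S" and "\<And>y. y \<in> span S \<Longrightarrow> B y y = 0 \<Longrightarrow> y = 0"
  shows "\<exists>Y\<in>span S. \<forall>s\<in>S. B (A - Y) s = 0"
  using assms
proof (induction S arbitrary: A rule: finite_induct)
  case empty
  show ?case using span_zero by blast
next
  case (insert a S)
  have definite: "\<And>y. y \<in> span S \<Longrightarrow> B y y = 0 \<Longrightarrow> y = 0"
    using insert.prems span_mono[of S "insert a S"] by blast
  obtain PA where PA: "PA \<in> span S" "\<forall>s\<in>S. B (A - PA) s = 0"
    using insert.IH[OF definite] by blast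
  obtain Pa where Pa: "Pa \<in> span S" "\<forall>s\<in>S. B (a - Pa) s = 0"
    using insert.IH[OF definite] by blast
  define w where "w = a - Pa"
  have w_span: "w \<in> span (insert a S)"
    unfolding w_def using Pa(1) span_mono[of S "insert a S"]
    by (blast intro: span_diff span_base)
  have span_sub: "span S \<subseteq> span (insert a S)" by (rule span_mono) blast
  show ?case
  proof (cases "B w w = 0")
    case True
    then have "w = 0" using insert.prems w_span by blast
    then have "a = Pa" by (simp add: w_def)
    then have "B (A - PA) a = 0" using orthogonal_to_span PA(2) Pa(1) by blast
    then show ?thesis using PA span_sub by blast
  next
    case False
    define c where "c = B (A - PA) w / B w w"
    define Y where "Y = PA + c *\<^sub>R w"
    have "A - Y = (A - PA) - c *\<^sub>R w" by (simp add: Y_def)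
    then have orth: "B (A - Y) z = B (A - PA) z - c * B w z" for z
      by (simp only: bilinear_lsub[OF bilinear] bilinear_lmul[OF bilinear]) simp
    have orth_S: "B (A - Y) s = 0" if "s \<in> S" for s
      using PA(2) Pa(2) that by (simp add: orth w_def)
    have "B (A - Y) w = 0" using False by (simp add: orth c_def)
    moreover have "B (A - Y) Pa = 0" using orthogonal_to_span[OF orth_S Pa(1)] by blast
    ultimately have "B (A - Y) a = 0"
      by (simp add: w_def bilinear_rsub[OF bilinear])
    moreover have "Y \<in> span (insert a S)"
      unfolding Y_def using PA(1) span_sub w_span by (blast intro: span_add span_scale)
    ultimately show ?thesis using orth_S by blast
  qed
qed

lemma ex1_orthogonal_projection:
  assumes "finite S" and definite: "\<And>y. y \<in> span S \<Longrightarrow> B y y = 0 \<Longrightarrow> y = 0"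
  shows "\<exists>!Y. Y \<in> span S \<and> (\<forall>Z\<in>span S. B (A - Y) Z = 0)"
proof -
  obtain Y where Y: "Y \<in> span S" "\<forall>s\<in>S. B (A - Y) s = 0"
    using ex_orthogonal_projection[OF assms] by blast
  have "Y' = Y" if "Y' \<in> span S" "\<forall>Z\<in>span S. B (A - Y') Z = 0" for Y'
  proof -
    have "Y - Y' \<in> span S" using Y(1) that(1) by (rule span_diff)
    moreover have "B (Y - Y') (Y - Y') = B (A - Y') (Y - Y') - B (A - Y) (Y - Y')"
      by (simp add: bilinear_lsub[OF bilinear] algebra_simps)
    ultimately have "B (Y - Y') (Y - Y') = 0"
      using that(2) orthogonal_to_span[of S "A - Y"] Y(2) by auto
    then show ?thesis using definite \<open>Y - Y' \<in> span S\<close> by fastforce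
  qed
  then show ?thesis using Y orthogonal_to_span[of S "A - Y"] by blast
qed

end

lemma span_image_lessThan: "span (v ` {..<n::nat}) = {Y. \<exists>c. Y = (\<Sum>k<n. c k *\<^sub>R v k)}"
proof
  show "span (v ` {..<n}) \<subseteq> {Y. \<exists>c. Y = (\<Sum>k<n. c k *\<^sub>R v k)}"
  proof
    fix Y assume "Y \<in> span (v ` {..<n})"
    then show "Y \<in> {Y. \<exists>c. Y = (\<Sum>k<n. c k *\<^sub>R v k)}"
    proof (induction rule: span_induct_alt)
      case base
      show ?case by (auto intro: exI[of _ "\<lambda>_. 0"])
    next
      case (step a x Y)
      obtain j c where "j < n" "x = v j" "Y = (\<Sum>k<n. c k *\<^sub>R v k)" using step by auto
      have "(\<Sum>k<n. (if k = j then a else 0) *\<^sub>R v k) = a *\<^sub>R x"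
        using \<open>j < n\<close> \<open>x = v j\<close>
        by (simp add: if_distrib[of "\<lambda>r. r *\<^sub>R _"] sum.delta cong: if_cong)
      then have "a *\<^sub>R x + Y = (\<Sum>k<n. (c k + (if k = j then a else 0)) *\<^sub>R v k)"
        using \<open>Y = _\<close> by (simp add: scaleR_add_left sum.distrib)
      then show ?case by (auto intro: exI[of _ "\<lambda>k. c k + (if k = j then a else 0)"])
    qed
  qed
  show "{Y. \<exists>c. Y = (\<Sum>k<n. c k *\<^sub>R v k)} \<subseteq> span (v ` {..<n})"
    by (auto intro!: span_sum span_scale intro: span_base)
qed

section \<open>Krylov spaces and the Neumann series of \<open>R\<^sub>\<rho>\<close>\<close>

lemma linear_Rop: "linear (Rop \<rho>)"
  by (rule linearI)
    (simp_all add: Rop_def matrix_add_ldistrib matrix_add_rdistrib matrix_scaleR_left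
      matrix_scaleR_right algebra_simps)

lemma rho_inner_symmetric_bilinear: "symmetric_bilinear_form (rho_inner \<rho>)"
proof
  show symmetric: "rho_inner \<rho> X Y = rho_inner \<rho> Y X" for X Y
    by (simp add: rho_inner_def add.commute)
  have "linear (\<lambda>X. rho_inner \<rho> X Y)" for Y
    by (rule linearI)
      (simp_all add: rho_inner_def matrix_add_ldistrib matrix_add_rdistrib matrix_scaleR_left
        matrix_scaleR_right trace_add trace_scaleR scaleR_add_right algebra_simps)
  then show "bilinear (rho_inner \<rho>)" by (simp add: bilinear_def symmetric)
qed

text \<open>Partial sums of the Neumann series
  \<open>R\<^sub>\<rho>\<^sup>-\<^sup>1 = 2 (1 - (1 - 2 R\<^sub>\<rho>))\<^sup>-\<^sup>1\<close>, truncated after \<open>n\<close> terms.\<close>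

definition neumann_sum :: "'d::finite cmat \<Rightarrow> 'd cmat \<Rightarrow> nat \<Rightarrow> 'd cmat" where
  "neumann_sum \<rho> Y n = (\<Sum>j<n. 2 *\<^sub>R ((\<lambda>Z. Z - 2 *\<^sub>R Rop \<rho> Z) ^^ j) Y)"

lemma Rop_in_span_iterates:
  assumes "X \<in> span ((\<lambda>k. (Rop \<rho> ^^ k) Y) ` {..<m})"
  shows "Rop \<rho> X \<in> span ((\<lambda>k. (Rop \<rho> ^^ k) Y) ` {..<Suc m})"
proof -
  let ?v = "\<lambda>k. (Rop \<rho> ^^ k) Y"
  have "Rop \<rho> ` ?v ` {..<m} \<subseteq> ?v ` {..<Suc m}"
    by (auto intro!: image_eqI[where x = "Suc _"])
  then have "span (Rop \<rho> ` ?v ` {..<m}) \<subseteq> span (?v ` {..<Suc m})"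
    by (rule span_mono)
  then show ?thesis using assms span_linear_image[OF linear_Rop] by blast
qed

lemma neumann_sum_in_span: "neumann_sum \<rho> Y n \<in> span ((\<lambda>k. (Rop \<rho> ^^ k) Y) ` {..<n})"
proof -
  let ?K = "\<lambda>m. span ((\<lambda>k. (Rop \<rho> ^^ k) Y) ` {..<m})"
  have "((\<lambda>Z. Z - 2 *\<^sub>R Rop \<rho> Z) ^^ j) Y \<in> ?K (Suc j)" for j
  proof (induction j)
    case 0
    show ?case by (auto intro: span_base)
  next
    case (Suc j)
    have "?K (Suc j) \<subseteq> ?K (Suc (Suc j))" by (auto intro!: span_mono)
    then show ?case using Suc Rop_in_span_iterates[OF Suc]
      by (auto intro!: span_diff span_scale)
  qed
  moreover have "?K (Suc j) \<subseteq> ?K n" if "j < n" for j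
    using that by (auto intro!: span_mono)
  ultimately show ?thesis
    unfolding neumann_sum_def by (blast intro: span_sum span_scale)
qed

lemma Krylov_eq_span: "Krylov \<rho> H n = span ((\<lambda>k. (Rop \<rho> ^^ k) (icomm \<rho> H)) ` {..<n})"
  by (simp add: Krylov_def span_image_lessThan)

section \<open>Coordinates in the eigenbasis of \<open>\<rho>\<close>\<close>

locale eigenbasis =
  fixes \<rho> U :: "complex^'d::finite^'d" and p :: "'d \<Rightarrow> real"
  assumes spectral: "spectral_decomp \<rho> U p" and psd: "psd \<rho>"
begin

sublocale basis: matrix_similarity U "adj U"
  using spectral by unfold_locales (auto simp: spectral_decomp_def unitary_def)

lemma melem_eq_transform: "melem U X k l = basis.transform X $ k $ l"
  by (simp add: melem_def basis.transform_def)

lemma melem_ext: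
  assumes "\<And>k l. melem U X k l = melem U Y k l"
  shows "X = Y"
proof -
  have "basis.transform X = basis.transform Y"
    using assms by (simp add: vec_eq_iff melem_eq_transform)
  then show ?thesis by (simp only: basis.transform_inject)
qed

lemma melem_zero: "melem U 0 k l = 0"
  by (simp add: melem_def)

lemma melem_add: "melem U (X + Y) k l = melem U X k l + melem U Y k l"
  by (simp add: melem_eq_transform basis.transform_add)

lemma melem_diff: "melem U (X - Y) k l = melem U X k l - melem U Y k l"
  by (simp add: melem_eq_transform basis.transform_diff)

lemma melem_scaleR: "melem U (r *\<^sub>R X) k l = of_real r * melem U X k l"
  unfolding melem_def matrix_scaleR_left matrix_scaleR_right vector_scaleR_component
  by (simp add: scaleR_conv_of_real)

lemma melem_sum: "melem U (\<Sum>i\<in>S. f i) k l = (\<Sum>i\<in>S. melem U (f i) k l)"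
  by (simp add: melem_eq_transform basis.transform_sum sum_component)

lemma melem_mult: "melem U (X ** Y) k l = (\<Sum>j\<in>UNIV. melem U X k j * melem U Y j l)"
  by (simp add: melem_eq_transform basis.transform_mult matrix_mult_entry)

lemma transform_rho: "basis.transform \<rho> = diagm p"
  using spectral basis.transform_inverse by (simp add: spectral_decomp_def)

lemma melem_rho: "melem U \<rho> k l = (if k = l then of_real (p k) else 0)"
  by (simp add: melem_eq_transform transform_rho diagm_def)

lemma eigenvalue_nonneg: "0 \<le> p k"
proof -
  let ?q = "\<Sum>i\<in>UNIV. \<Sum>j\<in>UNIV. cnj (column k U $ i) * \<rho> $ i $ j * column k U $ j"
  have "complex_of_real (p k) = (adj U ** \<rho> ** U) $ k $ k"
    using transform_rho by (simp add: basis.transform_def diagm_def)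
  also have "\<dots> = ?q"
    by (simp add: matrix_mult_entry adj_def column_def sum_distrib_left
        sum_distrib_right mult_ac) (rule sum.swap)
  finally have "p k = Re ?q"
    by (metis Re_complex_of_real)
  moreover have "0 \<le> Re ?q"
    using psd unfolding psd_def by (elim conjE allE)
  ultimately show ?thesis by simp
qed

lemma melem_rho_mult: "melem U (\<rho> ** X) k l = p k * melem U X k l"
  by (simp add: melem_mult melem_rho if_distrib if_distribR sum.delta cong: if_cong)

lemma melem_mult_rho: "melem U (X ** \<rho>) k l = p l * melem U X k l"
  by (simp add: melem_mult melem_rho if_distrib if_distribR sum.delta' mult.commute cong: if_cong)

lemma melem_adj: "melem U (adj X) k l = cnj (melem U X l k)"
proof -
  have "basis.transform (adj X) = adj (basis.transform X)"
    by (simp add: basis.transform_def adj_mult matrix_mul_assoc)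
  then show ?thesis by (simp add: melem_eq_transform adj_def)
qed

lemma hermitian_melemD: "hermitian X \<Longrightarrow> melem U X l k = cnj (melem U X k l)"
  by (metis hermitian_def melem_adj)

lemma hermitian_melemI:
  assumes "\<And>k l. melem U X l k = cnj (melem U X k l)"
  shows "hermitian X"
proof -
  have "adj X = X"
    by (rule melem_ext) (metis assms melem_adj)
  then show ?thesis by (simp add: hermitian_def)
qed

lemma trace_eq_sum_melem: "trace X = (\<Sum>k\<in>UNIV. melem U X k k)"
  by (simp add: melem_eq_transform basis.trace_transform flip: trace_def)

lemma melem_Rop: "melem U (Rop \<rho> X) k l = of_real ((p k + p l) / 2) * melem U X k l"
  by (simp add: Rop_def melem_scaleR melem_add melem_rho_mult melem_mult_rho algebra_simps)

lemma melem_icomm: "melem U (icomm \<rho> H) k l = \<i> * of_real (p k - p l) * melem U H k l"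
proof -
  have "melem U (icomm \<rho> H) k l = \<i> * melem U (commutator \<rho> H) k l"
    by (simp add: icomm_def melem_def matrix_matrix_mult_def sum_distrib_left sum_distrib_right
        mult_ac)
  then show ?thesis
    by (simp add: commutator_def melem_diff melem_rho_mult melem_mult_rho algebra_simps)
qed

lemma rho_inner_eq_sum:
  "rho_inner \<rho> X Y = (\<Sum>k\<in>UNIV. \<Sum>l\<in>UNIV. (p k + p l) / 2 * Re (melem U X k l * melem U Y l k))"
proof -
  have "rho_inner \<rho> X Y = (\<Sum>k\<in>UNIV. \<Sum>l\<in>UNIV. p k / 2 * Re (melem U X k l * melem U Y l k))
      + (\<Sum>k\<in>UNIV. \<Sum>l\<in>UNIV. p k / 2 * Re (melem U Y k l * melem U X l k))"
    unfolding rho_inner_def trace_eq_sum_melem melem_rho_mult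
    unfolding melem_scaleR melem_add melem_mult
    by (simp add: sum.distrib sum_distrib_left distrib_left Re_sum)
  also have "(\<Sum>k\<in>UNIV. \<Sum>l\<in>UNIV. p k / 2 * Re (melem U Y k l * melem U X l k))
     = (\<Sum>k\<in>UNIV. \<Sum>l\<in>UNIV. p l / 2 * Re (melem U X k l * melem U Y l k))"
    by (subst sum.swap) (simp add: mult.commute)
  finally show ?thesis
    by (simp add: add_divide_distrib distrib_right flip: sum.distrib)
qed

lemma rho_inner_hermitian:
  assumes "hermitian X"
  shows "rho_inner \<rho> X X = (\<Sum>k\<in>UNIV. \<Sum>l\<in>UNIV. (p k + p l) / 2 * (cmod (melem U X k l))\<^sup>2)"
proof -
  have "melem U X k l * melem U X l k = of_real ((cmod (melem U X k l))\<^sup>2)" for k l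
  proof -
    have "melem U X l k = cnj (melem U X k l)" using assms by (rule hermitian_melemD)
    then show ?thesis by (simp only: complex_norm_square)
  qed
  then show ?thesis by (simp add: rho_inner_eq_sum)
qed

lemma rho_inner_self_nonneg: "hermitian X \<Longrightarrow> 0 \<le> rho_inner \<rho> X X"
  by (simp add: rho_inner_hermitian sum_nonneg eigenvalue_nonneg)

lemma subspace_Xspace: "subspace (Xspace U p)"
  by (simp add: subspace_def Xspace_def hermitian_def adj_zero adj_add adj_scaleR melem_zero
      melem_add melem_scaleR)

lemma Rop_Xspace:
  assumes "X \<in> Xspace U p"
  shows "Rop \<rho> X \<in> Xspace U p"
proof -
  have "hermitian (Rop \<rho> X)"
  proof (rule hermitian_melemI)
    fix k l
    have "hermitian X" using assms by (simp add: Xspace_def)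
    then have "melem U X l k = cnj (melem U X k l)" by (rule hermitian_melemD)
    then show "melem U (Rop \<rho> X) l k = cnj (melem U (Rop \<rho> X) k l)"
      by (simp add: melem_Rop add.commute)
  qed
  then show ?thesis using assms by (simp add: Xspace_def melem_Rop)
qed

lemma icomm_Xspace:
  assumes "hermitian H"
  shows "icomm \<rho> H \<in> Xspace U p"
proof -
  have "hermitian (icomm \<rho> H)"
  proof (rule hermitian_melemI)
    fix k l
    have "melem U H l k = cnj (melem U H k l)"
      using assms by (rule hermitian_melemD)
    then show "melem U (icomm \<rho> H) l k = cnj (melem U (icomm \<rho> H) k l)"
      by (simp add: melem_icomm algebra_simps)
  qed
  then show ?thesis by (simp add: Xspace_def melem_icomm)
qed

lemma eigenvalues_zero_if_sum_not_pos: "\<not> 0 < p k + p l \<Longrightarrow> p k = 0 \<and> p l = 0"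
  using eigenvalue_nonneg[of k] eigenvalue_nonneg[of l] by linarith

lemma rho_inner_definite:
  assumes X: "X \<in> Xspace U p" and zero: "rho_inner \<rho> X X = 0"
  shows "X = 0"
proof (rule melem_ext)
  fix k l
  define f where "f k l = (p k + p l) / 2 * (cmod (melem U X k l))\<^sup>2" for k l
  have f_nonneg: "0 \<le> f k l" for k l
    using eigenvalue_nonneg[of k] eigenvalue_nonneg[of l] by (simp add: f_def)
  have "(\<Sum>k\<in>UNIV. \<Sum>l\<in>UNIV. f k l) = 0"
    using zero rho_inner_hermitian X by (simp add: Xspace_def f_def)
  then have "(\<Sum>l\<in>UNIV. f k l) = 0"
    by (simp add: sum_nonneg_eq_0_iff f_nonneg sum_nonneg)
  then have "f k l = 0"
    by (simp add: sum_nonneg_eq_0_iff f_nonneg)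
  then have "(p k + p l) / 2 * (cmod (melem U X k l))\<^sup>2 = 0"
    by (simp add: f_def)
  then show "melem U X k l = melem U 0 k l"
    using X eigenvalues_zero_if_sum_not_pos[of k l] by (auto simp: melem_zero Xspace_def)
qed

lemma Rop_inj_Xspace:
  assumes "X \<in> Xspace U p" "Y \<in> Xspace U p" and "Rop \<rho> X = Rop \<rho> Y"
  shows "X = Y"
proof (rule melem_ext)
  fix k l
  have eq: "of_real ((p k + p l) / 2) * melem U X k l = of_real ((p k + p l) / 2) * melem U Y k l"
    using assms(3) by (metis melem_Rop)
  show "melem U X k l = melem U Y k l"
  proof (cases "0 < p k + p l")
    case True
    then have "of_real ((p k + p l) / 2) \<noteq> (0::complex)"
      by (simp only: of_real_eq_0_iff) simp
    then show ?thesis using eq by (rule mult_left_cancel[THEN iffD1])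
  next
    case False
    then show ?thesis
      using assms(1,2) eigenvalues_zero_if_sum_not_pos[of k l] by (simp add: Xspace_def)
  qed
qed

lemma Krylov_span_Xspace:
  assumes "hermitian H"
  shows "span ((\<lambda>k. (Rop \<rho> ^^ k) (icomm \<rho> H)) ` {..<n}) \<subseteq> Xspace U p"
proof (rule span_minimal[OF _ subspace_Xspace])
  have "(Rop \<rho> ^^ k) (icomm \<rho> H) \<in> Xspace U p" for k
    by (induction k) (simp_all add: icomm_Xspace[OF assms] Rop_Xspace)
  then show "(\<lambda>k. (Rop \<rho> ^^ k) (icomm \<rho> H)) ` {..<n} \<subseteq> Xspace U p" by blast
qed

sublocale tensor_basis: matrix_similarity "tensor U U" "tensor (adj U) (adj U)"
  by unfold_locales (simp_all add: tensor_mult basis.inverse_left basis.inverse_right tensor_one)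

lemma tensor_basis_transform:
  "tensor_basis.transform (tensor A B) = tensor (basis.transform A) (basis.transform B)"
  by (simp add: tensor_basis.transform_def basis.transform_def tensor_mult)

lemma tensor_basis_transform_swap_op: "tensor_basis.transform swap_op = swap_op"
proof -
  have "tensor_basis.transform swap_op = swap_op ** (tensor (adj U) (adj U) ** tensor U U)"
    by (simp add: tensor_basis.transform_def tensor_swap_op_commute matrix_mul_assoc)
  then show ?thesis by (simp add: tensor_basis.inverse_left)
qed

lemma melem_neumann_remainder:
  "melem U (X - neumann_sum \<rho> (Rop \<rho> X) n) k l = of_real ((1 - (p k + p l)) ^ n) * melem U X k l"
proof -
  let ?x = "1 - (p k + p l)"
  have iterate: "melem U (((\<lambda>Z. Z - 2 *\<^sub>R Rop \<rho> Z) ^^ j) Y) k l = of_real (?x ^ j) * melem U Y k l"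
    for j Y by (induction j) (simp_all add: melem_diff melem_scaleR melem_Rop algebra_simps)
  have "melem U (neumann_sum \<rho> (Rop \<rho> X) n) k l
      = (\<Sum>j<n. of_real (2 * (?x ^ j * ((p k + p l) / 2))) * melem U X k l)"
    by (simp only: neumann_sum_def melem_sum melem_scaleR iterate melem_Rop of_real_mult mult.assoc)
  also have "\<dots> = of_real (\<Sum>j<n. 2 * (?x ^ j * ((p k + p l) / 2))) * melem U X k l"
    by (simp only: of_real_sum sum_distrib_right)
  also have "(\<Sum>j<n. 2 * (?x ^ j * ((p k + p l) / 2))) = (1 - ?x) * (\<Sum>j<n. ?x ^ j)"
    by (simp add: sum_distrib_left mult.commute)
  also have "\<dots> = 1 - ?x ^ n"
    by (rule one_diff_power_eq[symmetric])
  finally show ?thesis by (simp add: melem_diff algebra_simps)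
qed

end

section \<open>The SLD and the two bounds\<close>

locale fisher_setting = eigenbasis \<rho> U p
  for \<rho> U :: "complex^'d::finite^'d" and p :: "'d \<Rightarrow> real" +
  fixes H :: "complex^'d^'d"
  assumes hermitian_H: "hermitian H"
begin

lemma ex1_SLD: "\<exists>!L. L \<in> Xspace U p \<and> Rop \<rho> L = icomm \<rho> H"
proof -
  define L where "L = U ** (\<chi> k l. if 0 < p k + p l
      then of_real (2 / (p k + p l)) * melem U (icomm \<rho> H) k l else 0) ** adj U"
  have melem_L: "melem U L k l = (if 0 < p k + p l
      then of_real (2 / (p k + p l)) * melem U (icomm \<rho> H) k l else 0)" for k l
    by (simp add: L_def melem_eq_transform basis.transform_inverse)
  have "hermitian (icomm \<rho> H)"
    using icomm_Xspace[OF hermitian_H] by (simp add: Xspace_def)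
  then have icomm_conj: "melem U (icomm \<rho> H) l k = cnj (melem U (icomm \<rho> H) k l)" for k l
    by (rule hermitian_melemD)
  have "hermitian L"
  proof (rule hermitian_melemI)
    fix k l
    show "melem U L l k = cnj (melem U L k l)"
      by (simp only: melem_L icomm_conj[of k l] add.commute[of "p l"]) simp
  qed
  then have "L \<in> Xspace U p" by (simp add: Xspace_def melem_L)
  moreover have "Rop \<rho> L = icomm \<rho> H"
  proof (rule melem_ext)
    fix k l
    show "melem U (Rop \<rho> L) k l = melem U (icomm \<rho> H) k l"
    proof (cases "0 < p k + p l")
      case True
      then have "(p k + p l) / 2 * (2 / (p k + p l)) = 1" by simp
      then have "of_real ((p k + p l) / 2) * of_real (2 / (p k + p l)) = (1::complex)"
        by (metis of_real_1 of_real_mult)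
      then show ?thesis
        by (simp only: melem_Rop melem_L if_P[OF True] mult.assoc[symmetric] mult_1)
    next
      case False
      then show ?thesis
        using eigenvalues_zero_if_sum_not_pos[OF False] by (simp add: melem_Rop melem_L melem_icomm)
    qed
  qed
  ultimately show ?thesis
    by (metis Rop_inj_Xspace)
qed

lemma SLD_Xspace: "SLD \<rho> U p H \<in> Xspace U p"
  and Rop_SLD: "Rop \<rho> (SLD \<rho> U p H) = icomm \<rho> H"
  using theI'[OF ex1_SLD] by (simp_all add: SLD_def)

lemma melem_icomm_SLD:
  "melem U (icomm \<rho> H) k l = of_real ((p k + p l) / 2) * melem U (SLD \<rho> U p H) k l"
  by (metis Rop_SLD melem_Rop)

lemma icomm_SLD_norm:
  "(p k - p l)\<^sup>2 * (cmod (melem U H k l))\<^sup>2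
     = ((p k + p l) / 2)\<^sup>2 * (cmod (melem U (SLD \<rho> U p H) k l))\<^sup>2"
proof -
  have "\<bar>p k - p l\<bar> * cmod (melem U H k l) = cmod (melem U (icomm \<rho> H) k l)"
    by (simp add: melem_icomm norm_mult flip: of_real_diff)
  also have "\<dots> = (p k + p l) / 2 * cmod (melem U (SLD \<rho> U p H) k l)"
    using eigenvalue_nonneg[of k] eigenvalue_nonneg[of l]
    by (simp add: melem_icomm_SLD norm_mult flip: of_real_add)
  finally show ?thesis by (metis power2_abs power_mult_distrib)
qed

lemma QFI_eq_SLD_norm: "QFI U p H = rho_inner \<rho> (SLD \<rho> U p H) (SLD \<rho> U p H)"
proof -
  let ?L = "SLD \<rho> U p H"
  let ?w = "\<lambda>k l. (p k + p l) / 2 * (cmod (melem U ?L k l))\<^sup>2"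
  have entry: "2 * ((p k - p l)\<^sup>2 / (p k + p l) * (cmod (melem U H k l))\<^sup>2) = ?w k l"
    if "0 < p k + p l" for k l
    using icomm_SLD_norm[of k l] that by (simp add: field_simps power2_eq_square)
  have "QFI U p H = (\<Sum>x\<in>{(k, l). 0 < p k + p l}. ?w (fst x) (snd x))"
    unfolding QFI_def sum_distrib_left
  proof (rule sum.cong)
    fix x assume "x \<in> {(k, l). 0 < p k + p l}"
    moreover obtain k l where x: "x = (k, l)" by (cases x)
    ultimately have "0 < p k + p l" by simp
    then show "2 * (case x of (k, l) \<Rightarrow> (p k - p l)\<^sup>2 / (p k + p l) * (cmod (melem U H k l))\<^sup>2)
        = ?w (fst x) (snd x)"
      unfolding x by (simp only: prod.case fst_conv snd_conv entry)
  qed simp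
  also have "\<dots> = (\<Sum>x\<in>UNIV. ?w (fst x) (snd x))"
    by (rule sum.mono_neutral_left) (auto dest: eigenvalues_zero_if_sum_not_pos)
  also have "\<dots> = rho_inner \<rho> ?L ?L"
    using SLD_Xspace by (simp add: sum_UNIV_prod rho_inner_hermitian Xspace_def)
  finally show ?thesis .
qed

definition taylor_remainder :: "nat \<Rightarrow> real" where
  "taylor_remainder N = (\<Sum>k\<in>UNIV. \<Sum>l\<in>UNIV.
     (p k + p l) / 2 * (1 - (p k + p l)) ^ N * (cmod (melem U (SLD \<rho> U p H) k l))\<^sup>2)"

lemma taylor_remainder_even_nonneg: "0 \<le> taylor_remainder (2 * n)"
  unfolding taylor_remainder_def
  by (intro sum_nonneg mult_nonneg_nonneg) (simp_all add: eigenvalue_nonneg add_nonneg_nonneg power_even_eq)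

lemma rho_inner_neumann_error:
  "rho_inner \<rho> (SLD \<rho> U p H - neumann_sum \<rho> (icomm \<rho> H) n)
     (SLD \<rho> U p H - neumann_sum \<rho> (icomm \<rho> H) n) = taylor_remainder (2 * n)"
proof -
  let ?L = "SLD \<rho> U p H"
  let ?E = "?L - neumann_sum \<rho> (icomm \<rho> H) n"
  have melem_E: "melem U ?E k l = of_real ((1 - (p k + p l)) ^ n) * melem U ?L k l" for k l
    using melem_neumann_remainder[of ?L n k l] by (simp only: Rop_SLD)
  have "?E \<in> Xspace U p"
    using SLD_Xspace neumann_sum_in_span Krylov_span_Xspace[OF hermitian_H]
    by (blast intro: subspace_diff[OF subspace_Xspace])
  then have "rho_inner \<rho> ?E ?E = (\<Sum>k\<in>UNIV. \<Sum>l\<in>UNIV. (p k + p l) / 2 * (cmod (melem U ?E k l))\<^sup>2)"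
    by (simp add: rho_inner_hermitian Xspace_def)
  also have "\<dots> = taylor_remainder (2 * n)"
    unfolding taylor_remainder_def melem_E
    by (simp only: norm_mult norm_of_real power_mult_distrib power2_abs power_even_eq mult.assoc)
  finally show ?thesis .
qed

lemma proj_Krylov_SLD:
  fixes n :: nat
  defines "K \<equiv> Krylov \<rho> H n" and "L \<equiv> SLD \<rho> U p H"
  shows "proj \<rho> K L \<in> K \<and> (\<forall>Z\<in>K. rho_inner \<rho> (L - proj \<rho> K L) Z = 0)"
proof -
  interpret symmetric_bilinear_form "rho_inner \<rho>"
    by (rule rho_inner_symmetric_bilinear)
  have "\<exists>!Y. Y \<in> K \<and> (\<forall>Z\<in>K. rho_inner \<rho> (L - Y) Z = 0)"
    unfolding K_def Krylov_eq_span
    using Krylov_span_Xspace[OF hermitian_H] rho_inner_definite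
    by (intro ex1_orthogonal_projection) auto
  then show ?thesis unfolding proj_def by (rule theI')
qed

lemma krylov_bound_error:
  "0 \<le> QFI U p H - krylov_bound \<rho> U p H n \<and>
   QFI U p H - krylov_bound \<rho> U p H n \<le> taylor_remainder (2 * n)"
proof -
  interpret symmetric_bilinear_form "rho_inner \<rho>"
    by (rule rho_inner_symmetric_bilinear)
  let ?L = "SLD \<rho> U p H"
  let ?K = "Krylov \<rho> H n"
  let ?Y = "neumann_sum \<rho> (icomm \<rho> H) n"
  define Ln where "Ln = proj \<rho> ?K ?L"
  have Ln: "Ln \<in> ?K" and orth: "\<And>Z. Z \<in> ?K \<Longrightarrow> rho_inner \<rho> (?L - Ln) Z = 0"
    using proj_Krylov_SLD by (auto simp: Ln_def)
  have Y: "?Y \<in> ?K"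
    unfolding Krylov_eq_span by (rule neumann_sum_in_span)
  have "?L - Ln \<in> Xspace U p" and "Ln - ?Y \<in> Xspace U p"
    using SLD_Xspace Ln Y Krylov_span_Xspace[OF hermitian_H]
    by (auto simp: Krylov_eq_span intro: subspace_diff[OF subspace_Xspace])
  then have nonneg: "0 \<le> rho_inner \<rho> (?L - Ln) (?L - Ln)" "0 \<le> rho_inner \<rho> (Ln - ?Y) (Ln - ?Y)"
    by (simp_all add: Xspace_def rho_inner_self_nonneg)
  have "QFI U p H = rho_inner \<rho> (?L - Ln) (?L - Ln) + krylov_bound \<rho> U p H n"
    using pythagoras[OF orth[OF Ln]]
    by (simp add: QFI_eq_SLD_norm krylov_bound_def Ln_def Let_def)
  moreover have "taylor_remainder (2 * n)
      = rho_inner \<rho> (?L - Ln) (?L - Ln) + rho_inner \<rho> (Ln - ?Y) (Ln - ?Y)"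
    using pythagoras[OF orth[of "Ln - ?Y"]] Ln Y
    by (simp add: rho_inner_neumann_error[symmetric] Krylov_eq_span span_diff)
  ultimately show ?thesis using nonneg by simp
qed

lemma taylor_bound_eq_sum:
  "taylor_bound \<rho> H m = of_real (2 * (\<Sum>k\<in>UNIV. \<Sum>l\<in>UNIV.
     (p k - p l)\<^sup>2 * (\<Sum>j\<in>{0..m}. (1 - (p k + p l)) ^ j) * (cmod (melem U H k l))\<^sup>2))"
proof -
  define P where "P r = complex_of_real (p (fst r))" for r :: "'d \<times> 'd"
  define Q where "Q r = complex_of_real (p (snd r))" for r :: "'d \<times> 'd"
  define g where "g r = (\<Sum>j\<in>{0..m}. (P r - Q r)\<^sup>2 * (1 - P r - Q r) ^ j)" for r
  let ?Hb = "basis.transform H"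
  txt \<open>Conjugation by \<open>U \<otimes> U\<close> diagonalises \<open>\<rho> \<otimes> 1\<close> and
    \<open>1 \<otimes> \<rho>\<close> and fixes the swap.\<close>
  have rho_left: "tensor_basis.transform (tensor \<rho> (mat 1)) = diag_mat P"
    and rho_right: "tensor_basis.transform (tensor (mat 1) \<rho>) = diag_mat Q"
    and one: "tensor_basis.transform (tensor (mat 1) (mat 1)) = diag_mat (\<lambda>_. 1)"
    by (simp_all only: tensor_basis_transform transform_rho basis.transform_one)
      (simp_all add: diagm_eq_diag_mat diag_mat_one tensor_diag_mat P_def[abs_def] Q_def[abs_def])
  have summand: "tensor_basis.transform (mpow (tensor \<rho> (mat 1) - tensor (mat 1) \<rho>) 2
      ** mpow (tensor (mat 1) (mat 1) - tensor \<rho> (mat 1) - tensor (mat 1) \<rho>) j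
      ** swap_op ** tensor H H)
    = diag_mat (\<lambda>r. (P r - Q r)\<^sup>2 * (1 - P r - Q r) ^ j) ** swap_op ** tensor ?Hb ?Hb" for j
    by (simp only: tensor_basis.transform_mult tensor_basis.transform_mpow
        tensor_basis.transform_diff rho_left rho_right one diag_mat_diff mpow_diag_mat diag_mat_mult tensor_basis_transform_swap_op
        tensor_basis_transform[of H H])
  have "taylor_bound \<rho> H m = 2 * trace (diag_mat g ** swap_op ** tensor ?Hb ?Hb)"
    unfolding taylor_bound_def
    by (subst tensor_basis.trace_transform[symmetric])
      (simp only: tensor_basis.transform_sum summand,
        simp only: g_def[abs_def] diag_mat_sum matrix_sum_rdistrib[symmetric])
  also have "\<dots> = 2 * (\<Sum>r\<in>UNIV. g r * (?Hb $ snd r $ fst r * ?Hb $ fst r $ snd r))"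
    by (simp only: matrix_mul_assoc[symmetric] trace_diag_mat_mult swap_op_mult_entry tensor_entry
        fst_conv snd_conv)
  also have "\<dots> = 2 * (\<Sum>k\<in>UNIV. \<Sum>l\<in>UNIV. g (k, l) * of_real ((cmod (melem U H k l))\<^sup>2))"
  proof -
    have "?Hb $ l $ k * ?Hb $ k $ l = of_real ((cmod (melem U H k l))\<^sup>2)" for k l
    proof -
      have "?Hb $ l $ k = cnj (?Hb $ k $ l)"
        using hermitian_melemD[OF hermitian_H, of l k] by (simp only: melem_eq_transform)
      then show ?thesis by (simp only: melem_eq_transform complex_norm_square mult.commute)
    qed
    then show ?thesis by (simp only: sum_UNIV_prod fst_conv snd_conv)
  qed
  also have "\<dots> = of_real (2 * (\<Sum>k\<in>UNIV. \<Sum>l\<in>UNIV.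
     (p k - p l)\<^sup>2 * (\<Sum>j\<in>{0..m}. (1 - (p k + p l)) ^ j) * (cmod (melem U H k l))\<^sup>2))"
    by (simp add: g_def P_def Q_def sum_distrib_left sum_distrib_right diff_diff_eq mult_ac)
  finally show ?thesis .
qed

lemma taylor_bound_eq: "taylor_bound \<rho> H m = of_real (QFI U p H - taylor_remainder (Suc m))"
proof -
  let ?L = "SLD \<rho> U p H"
  have "2 * ((p k - p l)\<^sup>2 * (\<Sum>j\<in>{0..m}. (1 - (p k + p l)) ^ j) * (cmod (melem U H k l))\<^sup>2)
     = (p k + p l) / 2 * (cmod (melem U ?L k l))\<^sup>2
       - (p k + p l) / 2 * (1 - (p k + p l)) ^ Suc m * (cmod (melem U ?L k l))\<^sup>2" for k l
  proof -
    define s where "s = p k + p l"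
    define G where "G = (\<Sum>j\<in>{0..m}. (1 - s) ^ j)"
    define c where "c = (cmod (melem U ?L k l))\<^sup>2"
    have sG: "s * G = 1 - (1 - s) ^ Suc m"
      using one_diff_power_eq[of "1 - s" "Suc m"]
      by (simp add: G_def atLeast0AtMost lessThan_Suc_atMost)
    have "2 * ((p k - p l)\<^sup>2 * G * (cmod (melem U H k l))\<^sup>2)
        = 2 * G * ((p k - p l)\<^sup>2 * (cmod (melem U H k l))\<^sup>2)"
      by (simp only: mult_ac)
    also have "\<dots> = s / 2 * c * (s * G)"
      by (simp only: icomm_SLD_norm, simp add: s_def c_def power2_eq_square)
    also have "\<dots> = s / 2 * c - s / 2 * (1 - s) ^ Suc m * c"
      by (simp only: sG, simp add: algebra_simps)
    finally show ?thesis by (simp only: s_def G_def c_def)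
  qed
  then show ?thesis
    using SLD_Xspace
    by (simp add: taylor_bound_eq_sum QFI_eq_SLD_norm rho_inner_hermitian Xspace_def
        taylor_remainder_def sum_distrib_left sum_subtractf)
qed

end

theorem theorem2:
  fixes \<rho> H U :: "complex^'d::finite^'d" and p :: "'d \<Rightarrow> real"
  assumes "density_matrix \<rho>"
    and "hermitian H"
    and "spectral_decomp \<rho> U p"
    and "QFI U p H > 0"
  shows "\<forall>n::nat. n \<ge> 1 \<longrightarrow>
     \<bar>krylov_bound \<rho> U p H n - QFI U p H\<bar> / QFI U p H
       \<le> cmod (taylor_bound \<rho> H (2*n - 1) - complex_of_real (QFI U p H)) / QFI U p H"
proof (intro allI impI)
  fix n :: nat
  assume "n \<ge> 1"
  interpret fisher_setting \<rho> U p H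
    using assms(1-3) by unfold_locales (simp_all add: density_matrix_def)
  have "taylor_bound \<rho> H (2*n - 1) = of_real (QFI U p H - taylor_remainder (2 * n))"
    using taylor_bound_eq[of "2*n - 1"] \<open>n \<ge> 1\<close> by simp
  then have "cmod (taylor_bound \<rho> H (2*n - 1) - complex_of_real (QFI U p H)) = taylor_remainder (2 * n)"
    using taylor_remainder_even_nonneg[of n] by (simp flip: of_real_diff)
  moreover have "\<bar>krylov_bound \<rho> U p H n - QFI U p H\<bar> \<le> taylor_remainder (2 * n)"
    using krylov_bound_error[of n] by linarith
  ultimately show "\<bar>krylov_bound \<rho> U p H n - QFI U p H\<bar> / QFI U p H
       \<le> cmod (taylor_bound \<rho> H (2*n - 1) - complex_of_real (QFI U p H)) / QFI U p H"
    using assms(4) by (simp add: divide_right_mono)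
qed

end
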